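(* Let $\mathbf{k}$ be a commutative ring, $n\ge0$, $\mathcal{A}=\mathbf{k}[S_n]$. Let $\alpha\in\operatorname{Comp}_n$ and define \[\mathcal{S}_\alpha:=\operatorname{span}_{\mathbf{k}}\{\mathbf{B}_{\operatorname{LRM}'(w)}\,w \mid w\in S_n,\ \widetilde{\operatorname{cLRM}'(w)}\preceq_\pi\widetilde{\alpha}\}.\] Then $\mathcal{S}_\alpha=\mathcal{R}_\alpha$, where $\mathcal{R}_\alpha:=\mathbf{B}_\alpha\mathcal{A}$.
   Context: $S_n$ is the symmetric group on $[n]=\{1,\dots,n\}$, with product $(uw)(i)=u(w(i))$. $\operatorname{Des}(u)=\{i\in[n-1]:u(i)>u(i+1)\}$; for $I\subseteq[n-1]$, $\mathbf{B}_I=\sum_{u\in S_n,\ \operatorname{Des}(u)\subseteq I}u$. A composition $\alpha=(\alpha_1,\dots,\alpha_p)$ of $n$ is a finite sequence of positive integers with sum $n$; $\operatorname{Comp}_n$ is the set of these. $\operatorname{Set}(\alpha)=\{\alpha_1,\alpha_1+\alpha_2,\dots,\alpha_1+\cdots+\alpha_{p-1}\}$ and $\mathbf{B}_\alpha:=\mathbf{B}_{\operatorname{Set}(\alpha)}$. For $I=\{i_1<\cdots<i_{p-1}\}\subseteq[n-1]$, $\operatorname{Comp}(I)=(i_1-i_0,i_2-i_1,\dots,i_p-i_{p-1})$ with $i_0=0$, $i_p=n$ (inverse of $\operatorname{Set}$). $\operatorname{LRM}(w)=\{i\in[n]: w(k)>i \text{ for all } k<w^{-1}(i)\}$ (left-to-right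 minima), $\operatorname{LRM}'(w)=\{\ell-1:\ell\in\operatorname{LRM}(w),\ \ell>1\}$, $\operatorname{cLRM}'(w)=\operatorname{Comp}(\operatorname{LRM}'(w))$. The underlying partition $\widetilde\alpha$ sorts the parts of $\alpha$ weakly decreasingly. For partitions $\lambda=(\lambda_1,\dots,\lambda_k)$, $\mu=(\mu_1,\dots,\mu_l)$ of $n$, $\lambda\preceq_\pi\mu$ means there is a map $f:[k]\to[l]$ with $\mu_j=\sum_{i\in f^{-1}(j)}\lambda_i$ for all $j$ (equivalently, some rearrangement of $\lambda$ refines $\mu$ as a composition). *)

theory Defs
  imports "HOL-Combinatorics.Permutations"
begin

definition perms :: "nat \<Rightarrow> (nat \<Rightarrow> nat) set" where
  "perms n = {p. p permutes {1..n}}"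

text \<open>The group algebra k[S_n]: functions S_n -> k, represented as functions on all
  nat => nat that vanish outside perms n.\<close>
definition grp_alg :: "nat \<Rightarrow> ((nat \<Rightarrow> nat) \<Rightarrow> 'k::comm_ring_1) set" where
  "grp_alg n = {x. \<forall>u. u \<notin> perms n \<longrightarrow> x u = 0}"

text \<open>Multiplication in k[S_n], with product (uv)(i) = u(v(i)).\<close>
definition alg_mult :: "nat \<Rightarrow> ((nat \<Rightarrow> nat) \<Rightarrow> 'k::comm_ring_1) \<Rightarrow> ((nat \<Rightarrow> nat) \<Rightarrow> 'k) \<Rightarrow> ((nat \<Rightarrow> nat) \<Rightarrow> 'k)" where
  "alg_mult n x y = (\<lambda>w. \<Sum>u\<in>perms n. \<Sum>v\<in>perms n. if u \<circ> v = w then x u * y v else 0)"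

definition perm_elem :: "(nat \<Rightarrow> nat) \<Rightarrow> ((nat \<Rightarrow> nat) \<Rightarrow> 'k::comm_ring_1)" where
  "perm_elem w = (\<lambda>u. if u = w then 1 else 0)"

definition Des :: "nat \<Rightarrow> (nat \<Rightarrow> nat) \<Rightarrow> nat set" where
  "Des n u = {i \<in> {1..n-1}. u i > u (Suc i)}"

definition BI :: "nat \<Rightarrow> nat set \<Rightarrow> ((nat \<Rightarrow> nat) \<Rightarrow> 'k::comm_ring_1)" where
  "BI n I = (\<lambda>u. if u \<in> perms n \<and> Des n u \<subseteq> I then 1 else 0)"

definition Comps :: "nat \<Rightarrow> nat list set" where
  "Comps n = {\<alpha>. (\<forall>a\<in>set \<alpha>. a > 0) \<and> sum_list \<alpha> = n}"

definition SetC :: "nat list \<Rightarrow> nat set" where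
  "SetC \<alpha> = {sum_list (take j \<alpha>) | j. 1 \<le> j \<and> j < length \<alpha>}"

definition CompI :: "nat \<Rightarrow> nat set \<Rightarrow> nat list" where
  "CompI n I = (if n = 0 then [] else
     (let is = 0 # sorted_list_of_set I @ [n]
      in map (\<lambda>j. is ! (Suc j) - is ! j) [0..<length is - 1]))"

definition LRM :: "nat \<Rightarrow> (nat \<Rightarrow> nat) \<Rightarrow> nat set" where
  "LRM n w = {i \<in> {1..n}. \<forall>k. 1 \<le> k \<and> k < inv w i \<longrightarrow> w k > i}"

definition LRM' :: "nat \<Rightarrow> (nat \<Rightarrow> nat) \<Rightarrow> nat set" where
  "LRM' n w = {l - 1 | l. l \<in> LRM n w \<and> l > 1}"

definition cLRM' :: "nat \<Rightarrow> (nat \<Rightarrow> nat) \<Rightarrow> nat list" where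
  "cLRM' n w = CompI n (LRM' n w)"

definition underlying_partition :: "nat list \<Rightarrow> nat list" where
  "underlying_partition \<alpha> = rev (sort \<alpha>)"

definition part_le :: "nat list \<Rightarrow> nat list \<Rightarrow> bool" where
  "part_le lam mu = (\<exists>f. (\<forall>i<length lam. f i < length mu) \<and>
      (\<forall>j<length mu. mu ! j = (\<Sum>i\<in>{i. i < length lam \<and> f i = j}. lam ! i)))"

definition kspan :: "'a set \<Rightarrow> ('a \<Rightarrow> ('b \<Rightarrow> 'k::comm_ring_1)) \<Rightarrow> ('b \<Rightarrow> 'k) set" where
  "kspan W g = {x. \<exists>c. x = (\<lambda>u. \<Sum>w\<in>W. c w * g w u)}"

end

(*
  B_beta v is the sum of the permutations x that increase along every block of the word
  v^-1(1) ... v^-1(n) cut into consecutive pieces of lengths beta.  So R_alpha is spanned by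
  such "increasing sums" of ordered set partitions of [n] into lists with block sizes alpha,
  and the generator B_LRM'(w) w of S_alpha is the increasing sum of the word of w^-1 cut in
  front of its left-to-right minima: a partition whose lists start with their minima.

  Summing over all shuffles of two lists merges them into one block, so the increasing sum
  of any partition whose block sizes merge into alpha lies in R_alpha; this gives
  S_alpha <= R_alpha.  Conversely, cutting a list in front of its minimum and subtracting
  the other shuffles of the two pieces rewrites every increasing sum as a combination of
  increasing sums of partitions whose lists start with their minima and whose block sizes
  still merge into alpha (induction on a weight).  Ordered by decreasing first entries,
  such a partition is the word of some w^-1 cut at its left-to-right minima, with
  cLRM'(w) <=_pi alpha; this gives R_alpha <= S_alpha.
*)

theory Submission
  imports Defs "HOL-Library.Function_Algebras" "HOL.Modules"
begin

section \<open>Spans in the group algebra\<close>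

interpretation fun_module: module "\<lambda>c (f :: 'a \<Rightarrow> 'k::comm_ring_1) x. c * f x"
  by unfold_locales (auto simp: fun_eq_iff algebra_simps)

lemma sum_fun_apply: "(\<Sum>a\<in>A. f a) x = (\<Sum>a\<in>A. f a x)"
  by (induction A rule: infinite_finite_induct) auto

lemma kspanI: "x = (\<lambda>u. \<Sum>w\<in>W. c w * g w u) \<Longrightarrow> x \<in> kspan W g"
  unfolding kspan_def by blast

lemma kspan_eq_span:
  assumes "finite W"
  shows "kspan W g = fun_module.span (g ` W)"
proof
  show "kspan W g \<subseteq> fun_module.span (g ` W)"
  proof
    fix x assume "x \<in> kspan W g"
    then obtain c where "x = (\<lambda>u. \<Sum>w\<in>W. c w * g w u)"
      unfolding kspan_def by blast
    then have "x = (\<Sum>w\<in>W. (\<lambda>u. c w * g w u))"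
      by (simp add: fun_eq_iff sum_fun_apply)
    also have "\<dots> \<in> fun_module.span (g ` W)"
      by (intro fun_module.span_sum fun_module.span_scale fun_module.span_base) simp
    finally show "x \<in> fun_module.span (g ` W)" .
  qed
next
  have "g w \<in> kspan W g" if "w \<in> W" for w
  proof -
    have "g w = (\<lambda>u. \<Sum>v\<in>W. (if v = w then 1 else 0) * g v u)"
      using that assms by (simp add: if_distrib[of "\<lambda>c. c * _"] sum.delta cong: if_cong)
    then show ?thesis
      by (rule kspanI)
  qed
  moreover have "fun_module.subspace (kspan W g)"
  proof (rule fun_module.subspaceI)
    show "0 \<in> kspan W g"
      unfolding kspan_def by (auto intro!: exI[of _ "\<lambda>_. 0"])
  next
    fix x y assume "x \<in> kspan W g" "y \<in> kspan W g"
    then obtain c d where "x = (\<lambda>u. \<Sum>w\<in>W. c w * g w u)" "y = (\<lambda>u. \<Sum>w\<in>W. d w * g w u)"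
      unfolding kspan_def by blast
    then have "x + y = (\<lambda>u. \<Sum>w\<in>W. (c w + d w) * g w u)"
      by (simp add: fun_eq_iff sum.distrib distrib_right)
    then show "x + y \<in> kspan W g"
      by (rule kspanI)
  next
    fix a x assume "x \<in> kspan W g"
    then obtain c where "x = (\<lambda>u. \<Sum>w\<in>W. c w * g w u)"
      unfolding kspan_def by blast
    then have "(\<lambda>u. a * x u) = (\<lambda>u. \<Sum>w\<in>W. (a * c w) * g w u)"
      by (simp add: sum_distrib_left mult.assoc)
    then show "(\<lambda>u. a * x u) \<in> kspan W g"
      by (rule kspanI)
  qed
  ultimately show "fun_module.span (g ` W) \<subseteq> kspan W g"
    by (intro fun_module.span_minimal) auto
qed

lemma finite_perms: "finite (perms n)"
  unfolding perms_def using finite_permutations[of "{1..n}"] by simp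

lemma perms_comp: "u \<in> perms n \<Longrightarrow> v \<in> perms n \<Longrightarrow> u \<circ> v \<in> perms n"
  unfolding perms_def by (simp add: permutes_compose)

lemma perms_inv: "u \<in> perms n \<Longrightarrow> inv u \<in> perms n"
  unfolding perms_def by (simp add: permutes_inv)

lemma perms_inj: "u \<in> perms n \<Longrightarrow> inj u"
  unfolding perms_def using permutes_inj by blast

lemma alg_mult_perm_elem_sum:
  assumes "v \<in> perms n"
  shows "alg_mult n x (perm_elem v) w = (\<Sum>u\<in>perms n. if u \<circ> v = w then x u else 0)"
proof -
  have "(\<Sum>v'\<in>perms n. if u \<circ> v' = w then x u * perm_elem v v' else 0)
      = (\<Sum>v'\<in>perms n. if v' = v then (if u \<circ> v = w then x u else 0) else 0)" for u
    by (rule sum.cong) (auto simp: perm_elem_def)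
  then have "(\<Sum>v'\<in>perms n. if u \<circ> v' = w then x u * perm_elem v v' else 0)
      = (if u \<circ> v = w then x u else 0)" for u
    using assms by (simp add: finite_perms)
  then show ?thesis
    unfolding alg_mult_def by simp
qed

lemma alg_mult_perm_elem:
  assumes v: "v \<in> perms n"
  shows "alg_mult n x (perm_elem v) = (\<lambda>w. if w \<in> perms n then x (w \<circ> inv v) else 0)"
proof
  fix w :: "nat \<Rightarrow> nat"
  have bv: "bij v"
    using v unfolding perms_def by (simp add: permutes_bij)
  have vi: "v \<circ> inv v = id" "inv v \<circ> v = id"
    using surj_iff[THEN iffD1, OF bij_is_surj[OF bv]] inj_iff[THEN iffD1, OF bij_is_inj[OF bv]] .
  then have "u \<circ> v = w \<longleftrightarrow> u = w \<circ> inv v" for u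
    by (metis comp_assoc comp_id)
  then have "alg_mult n x (perm_elem v) w = (\<Sum>u\<in>perms n. if u = w \<circ> inv v then x u else 0)"
    unfolding alg_mult_perm_elem_sum[OF v] by presburger
  also have "\<dots> = (if w \<circ> inv v \<in> perms n then x (w \<circ> inv v) else 0)"
    by (simp add: finite_perms sum.delta')
  also have "w \<circ> inv v \<in> perms n \<longleftrightarrow> w \<in> perms n"
    using v vi perms_comp perms_inv by (metis comp_assoc comp_id)
  finally show "alg_mult n x (perm_elem v) w = (if w \<in> perms n then x (w \<circ> inv v) else 0)" .
qed

lemma alg_mult_expand_right:
  "alg_mult n x a = (\<lambda>w. \<Sum>v\<in>perms n. a v * alg_mult n x (perm_elem v) w)"
proof
  fix w :: "nat \<Rightarrow> nat"
  have "alg_mult n x a w = (\<Sum>v\<in>perms n. \<Sum>u\<in>perms n. if u \<circ> v = w then x u * a v else 0)"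
    unfolding alg_mult_def by (rule sum.swap)
  also have "\<dots> = (\<Sum>v\<in>perms n. a v * alg_mult n x (perm_elem v) w)"
    by (rule sum.cong[OF refl])
      (simp add: alg_mult_perm_elem_sum sum_distrib_left if_distrib mult.commute cong: if_cong)
  finally show "alg_mult n x a w = (\<Sum>v\<in>perms n. a v * alg_mult n x (perm_elem v) w)" .
qed

lemma right_ideal_eq_kspan:
  "{alg_mult n x a | a. a \<in> grp_alg n} = kspan (perms n) (\<lambda>v. alg_mult n x (perm_elem v))"
proof
  show "{alg_mult n x a | a. a \<in> grp_alg n} \<subseteq> kspan (perms n) (\<lambda>v. alg_mult n x (perm_elem v))"
    using kspanI[OF alg_mult_expand_right] by blast
next
  show "kspan (perms n) (\<lambda>v. alg_mult n x (perm_elem v)) \<subseteq> {alg_mult n x a | a. a \<in> grp_alg n}"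
  proof
    fix y assume "y \<in> kspan (perms n) (\<lambda>v. alg_mult n x (perm_elem v))"
    then obtain c where y: "y = (\<lambda>w. \<Sum>v\<in>perms n. c v * alg_mult n x (perm_elem v) w)"
      unfolding kspan_def by blast
    define a where "a v = (if v \<in> perms n then c v else 0)" for v
    have "a \<in> grp_alg n"
      unfolding grp_alg_def a_def by simp
    moreover have "y = alg_mult n x a"
      by (subst alg_mult_expand_right) (simp add: y a_def)
    ultimately show "y \<in> {alg_mult n x a | a. a \<in> grp_alg n}"
      by blast
  qed
qed

section \<open>Compositions and partial sums\<close>

definition psum :: "nat list \<Rightarrow> nat \<Rightarrow> nat" where
  "psum \<beta> j = sum_list (take j \<beta>)"

lemma psum_0 [simp]: "psum \<beta> 0 = 0"
  by (simp add: psum_def)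

lemma psum_Suc: "j < length \<beta> \<Longrightarrow> psum \<beta> (Suc j) = psum \<beta> j + \<beta> ! j"
  by (simp add: psum_def take_Suc_conv_app_nth)

lemma psum_length: "length \<beta> \<le> j \<Longrightarrow> psum \<beta> j = sum_list \<beta>"
  by (simp add: psum_def)

lemma psum_mono:
  assumes "j \<le> k"
  shows "psum \<beta> j \<le> psum \<beta> k"
proof -
  have "take k \<beta> = take j \<beta> @ take (k - j) (drop j \<beta>)"
    using take_add[of j "k - j" \<beta>] assms by simp
  then show ?thesis
    unfolding psum_def by simp
qed

lemma psum_strict_mono:
  assumes pos: "\<forall>a\<in>set \<beta>. a > 0" and "j < k" "k \<le> length \<beta>"
  shows "psum \<beta> j < psum \<beta> k"
proof -
  have "psum \<beta> j < psum \<beta> (Suc j)"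
    using assms by (simp add: psum_Suc)
  also have "\<dots> \<le> psum \<beta> k"
    using assms by (intro psum_mono) simp
  finally show ?thesis .
qed

lemma psum_less_iff:
  assumes "\<forall>a\<in>set \<beta>. a > 0" "j \<le> length \<beta>" "k \<le> length \<beta>"
  shows "psum \<beta> j < psum \<beta> k \<longleftrightarrow> j < k"
  using psum_strict_mono[OF assms(1)] psum_mono assms by (meson leD le_less_linear)

lemma psum_interval_cover:
  assumes "m \<le> length \<beta>" "i < psum \<beta> m"
  shows "\<exists>j<m. psum \<beta> j \<le> i \<and> i < psum \<beta> (Suc j)"
  using assms
proof (induction m)
  case (Suc m)
  then show ?case
    by (cases "i < psum \<beta> m") (auto intro: less_SucI)
qed simp

lemma Comps_pos: "\<beta> \<in> Comps n \<Longrightarrow> \<forall>a\<in>set \<beta>. a > 0"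
  by (simp add: Comps_def)

lemma psum_Comps: "\<beta> \<in> Comps n \<Longrightarrow> psum \<beta> (length \<beta>) = n"
  by (simp add: psum_length Comps_def)

lemma SetC_psum: "SetC \<beta> = {psum \<beta> j | j. 1 \<le> j \<and> j < length \<beta>}"
  unfolding SetC_def psum_def by simp

lemma not_in_SetC_iff:
  assumes b: "\<beta> \<in> Comps n"
  shows "(1 \<le> i \<and> i \<le> n - 1 \<and> i \<notin> SetC \<beta>) \<longleftrightarrow> (\<exists>j<length \<beta>. psum \<beta> j < i \<and> i < psum \<beta> (Suc j))"
proof
  assume i: "1 \<le> i \<and> i \<le> n - 1 \<and> i \<notin> SetC \<beta>"
  then have "i < psum \<beta> (length \<beta>)"
    using psum_Comps[OF b] by arith
  then obtain j where j: "j < length \<beta>" "psum \<beta> j \<le> i" "i < psum \<beta> (Suc j)"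
    using psum_interval_cover[of "length \<beta>" \<beta> i] by auto
  have "psum \<beta> j \<noteq> i"
    using i j unfolding SetC_psum by (cases "j = 0") auto
  then show "\<exists>j<length \<beta>. psum \<beta> j < i \<and> i < psum \<beta> (Suc j)"
    using j by auto
next
  assume "\<exists>j<length \<beta>. psum \<beta> j < i \<and> i < psum \<beta> (Suc j)"
  then obtain j where j: "j < length \<beta>" "psum \<beta> j < i" "i < psum \<beta> (Suc j)"
    by blast
  have pos: "\<forall>a\<in>set \<beta>. a > 0"
    using Comps_pos[OF b] .
  have "i < n"
    using j psum_mono[of "Suc j" "length \<beta>" \<beta>] psum_Comps[OF b] by simp
  moreover have "i \<noteq> psum \<beta> k" if "k < length \<beta>" for k
    using j that psum_less_iff[OF pos, of j k] psum_less_iff[OF pos, of k "Suc j"] by auto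
  ultimately show "1 \<le> i \<and> i \<le> n - 1 \<and> i \<notin> SetC \<beta>"
    using j unfolding SetC_psum by auto
qed

lemma CompI_SetC:
  assumes b: "\<beta> \<in> Comps n"
  shows "CompI n (SetC \<beta>) = \<beta>"
proof (cases "n = 0")
  case True
  then show ?thesis
    using b by (cases \<beta>) (auto simp: CompI_def Comps_def)
next
  case False
  have pos: "\<forall>a\<in>set \<beta>. a > 0"
    using Comps_pos[OF b] .
  have sn: "psum \<beta> (length \<beta>) = n"
    using psum_Comps[OF b] .
  have ne: "\<beta> \<noteq> []"
    using False sn by auto
  have "sorted_wrt (<) (map (psum \<beta>) [1..<length \<beta>])"
    unfolding sorted_wrt_map
    by (rule sorted_wrt_mono_rel[OF _ sorted_wrt_upt]) (auto intro: psum_strict_mono[OF pos])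
  moreover have "set (map (psum \<beta>) [1..<length \<beta>]) = SetC \<beta>"
    unfolding SetC_psum by auto
  ultimately have "sorted_list_of_set (SetC \<beta>) = map (psum \<beta>) [1..<length \<beta>]"
    by (metis sorted_list_of_set.idem_if_sorted_distinct strict_sorted_iff)
  moreover have "[0..<Suc (length \<beta>)] = 0 # [1..<length \<beta>] @ [length \<beta>]"
    using ne by (simp add: upt_conv_Cons)
  ultimately have ps: "0 # sorted_list_of_set (SetC \<beta>) @ [n] = map (psum \<beta>) [0..<Suc (length \<beta>)]"
    using sn by simp
  show ?thesis
    unfolding CompI_def Let_def ps using False
    by (intro nth_equalityI) (simp_all add: psum_Suc del: upt_Suc)
qed

lemma psum_differences:
  assumes s: "sorted_wrt (<) xs" and z: "xs ! 0 = (0::nat)" and j: "j < length xs"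
  shows "psum (map (\<lambda>j. xs ! Suc j - xs ! j) [0..<length xs - 1]) j = xs ! j"
  using j
proof (induction j)
  case (Suc j)
  then have "j < length xs - 1"
    by simp
  then show ?case
    using Suc sorted_wrt_nth_less[OF s, of j "Suc j"] by (simp add: psum_Suc)
qed (simp add: z)

lemma differences_Comps:
  assumes s: "sorted_wrt (<) ys" and ys: "ys = 0 # xs @ [n]"
  defines "\<beta> \<equiv> map (\<lambda>j. ys ! Suc j - ys ! j) [0..<length ys - 1]"
  shows "\<beta> \<in> Comps n" "SetC \<beta> = set xs"
proof -
  have psj: "psum \<beta> j = ys ! j" if "j < length ys" for j
    unfolding \<beta>_def using psum_differences[OF s _ that] by (simp add: ys)
  have lb: "length \<beta> = Suc (length xs)"
    by (simp add: \<beta>_def ys)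
  have "\<forall>a\<in>set \<beta>. a > 0"
    unfolding \<beta>_def using sorted_wrt_nth_less[OF s] by auto
  moreover have "sum_list \<beta> = n"
    using psj[of "Suc (length xs)"] lb psum_length[of \<beta> "length \<beta>"]
    by (simp add: ys nth_append)
  ultimately show "\<beta> \<in> Comps n"
    by (simp add: Comps_def)
  have "SetC \<beta> = psum \<beta> ` {1..<Suc (length xs)}"
    unfolding SetC_psum lb by auto
  also have "\<dots> = (!) ys ` {1..<Suc (length xs)}"
    by (rule image_cong) (simp_all add: psj ys)
  also have "\<dots> = (!) ys ` Suc ` {0..<length xs}"
    by (simp add: image_Suc_atLeastLessThan)
  also have "\<dots> = (!) xs ` {0..<length xs}"
    unfolding image_image by (rule image_cong) (simp_all add: ys nth_append)
  also have "\<dots> = set xs"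
    by (metis map_nth set_map set_upt)
  finally show "SetC \<beta> = set xs" .
qed

lemma SetC_CompI:
  assumes I: "I \<subseteq> {1..n-1}"
  shows "CompI n I \<in> Comps n" "SetC (CompI n I) = I"
proof -
  have "CompI n I \<in> Comps n \<and> SetC (CompI n I) = I"
  proof (cases "n = 0")
    case True
    then show ?thesis
      using I by (simp add: CompI_def Comps_def SetC_def)
  next
    case False
    let ?xs = "sorted_list_of_set I"
    have sx: "sorted_wrt (<) ?xs" "set ?xs = I"
      using I finite_subset[OF I] by auto
    let ?ys = "0 # ?xs @ [n]"
    have "sorted_wrt (<) ?ys"
      using sx I False by (force simp: sorted_wrt_append)
    moreover have "CompI n I = map (\<lambda>j. ?ys ! Suc j - ?ys ! j) [0..<length ?ys - 1]"
      unfolding CompI_def Let_def using False by simp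
    ultimately show ?thesis
      using differences_Comps[OF _ refl, of ?xs n] sx(2) by simp
  qed
  then show "CompI n I \<in> Comps n" "SetC (CompI n I) = I"
    by simp_all
qed

section \<open>Increasing sums of partitions into lists\<close>

definition list_partition :: "nat set \<Rightarrow> nat list set \<Rightarrow> bool" where
  "list_partition S \<Phi> \<longleftrightarrow> finite \<Phi> \<and> (\<forall>c\<in>\<Phi>. c \<noteq> [] \<and> distinct c) \<and>
     (\<forall>c\<in>\<Phi>. \<forall>d\<in>\<Phi>. c \<noteq> d \<longrightarrow> set c \<inter> set d = {}) \<and> \<Union>(set ` \<Phi>) = S"

definition block_sizes :: "nat list set \<Rightarrow> nat multiset" where
  "block_sizes \<Phi> = image_mset length (mset_set \<Phi>)"

definition increasing_sum :: "nat \<Rightarrow> nat list set \<Rightarrow> (nat \<Rightarrow> nat) \<Rightarrow> 'k::comm_ring_1" where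
  "increasing_sum n \<Phi> x = (if x \<in> perms n \<and> (\<forall>c\<in>\<Phi>. sorted_wrt (\<lambda>i j. x i < x j) c) then 1 else 0)"

definition blocks :: "nat list \<Rightarrow> (nat \<Rightarrow> nat) \<Rightarrow> nat list list" where
  "blocks \<beta> v = map (\<lambda>j. map (inv v) [Suc (psum \<beta> j)..<Suc (psum \<beta> (Suc j))]) [0..<length \<beta>]"

lemma list_partition_block: "list_partition S \<Phi> \<Longrightarrow> c \<in> \<Phi> \<Longrightarrow> c \<noteq> [] \<and> distinct c"
  unfolding list_partition_def by blast

lemma list_partition_set_iff:
  assumes "[] \<notin> set E"
  shows "list_partition S (set E) \<and> distinct E \<longleftrightarrow> distinct (concat E) \<and> set (concat E) = S"
  using assms unfolding list_partition_def distinct_concat_iff removeAll_id[OF assms] by fastforce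

lemma list_partition_concat:
  assumes "list_partition S (set E)" "distinct E"
  shows "distinct (concat E)" "set (concat E) = S"
proof -
  have "[] \<notin> set E"
    using assms(1) by (auto simp: list_partition_def)
  then show "distinct (concat E)" "set (concat E) = S"
    using list_partition_set_iff assms by blast+
qed

lemma list_partition_lengths_Comps:
  assumes "list_partition {1..n} (set E)" "distinct E"
  shows "map length E \<in> Comps n"
proof -
  have "length (concat E) = n"
    using list_partition_concat[OF assms] distinct_card by fastforce
  moreover have "\<forall>c\<in>set E. c \<noteq> []"
    using assms(1) by (simp add: list_partition_def)
  ultimately show ?thesis
    by (auto simp: Comps_def length_concat)
qed

lemma block_sizes_set: "distinct E \<Longrightarrow> block_sizes (set E) = mset (map length E)"
  unfolding block_sizes_def by (simp add: mset_set_set)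

lemma length_blocks [simp]: "length (blocks \<beta> v) = length \<beta>"
  by (simp add: blocks_def)

lemma nth_blocks:
  "j < length \<beta> \<Longrightarrow> blocks \<beta> v ! j = map (inv v) [Suc (psum \<beta> j)..<Suc (psum \<beta> (Suc j))]"
  by (simp add: blocks_def)

lemma map_length_blocks: "map length (blocks \<beta> v) = \<beta>"
  by (rule nth_equalityI) (simp_all add: nth_blocks psum_Suc)

lemma concat_psum_intervals:
  "concat (map (\<lambda>j. [psum \<beta> j..<psum \<beta> (Suc j)]) [0..<m]) = [0..<psum \<beta> m]"
proof (induction m)
  case (Suc m)
  have "psum \<beta> m \<le> psum \<beta> (Suc m)"
    by (rule psum_mono) simp
  then show ?case
    using Suc upt_add_eq_append[of 0 "psum \<beta> m" "psum \<beta> (Suc m) - psum \<beta> m"] by simp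
qed simp

lemma concat_blocks: "concat (blocks \<beta> v) = map (inv v) [1..<Suc (psum \<beta> (length \<beta>))]"
proof -
  have "blocks \<beta> v = map (map (inv v \<circ> Suc)) (map (\<lambda>j. [psum \<beta> j..<psum \<beta> (Suc j)]) [0..<length \<beta>])"
    unfolding blocks_def by (simp add: map_Suc_upt[symmetric] del: upt_Suc)
  then have "concat (blocks \<beta> v) = map (inv v \<circ> Suc) [0..<psum \<beta> (length \<beta>)]"
    by (simp add: map_concat[symmetric] concat_psum_intervals del: map_map)
  then show ?thesis
    by (simp add: map_Suc_upt[symmetric] del: upt_Suc)
qed

lemma list_partition_blocks:
  assumes b: "\<beta> \<in> Comps n" and v: "v \<in> perms n"
  shows "list_partition {1..n} (set (blocks \<beta> v))" "distinct (blocks \<beta> v)"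
proof -
  have "[] \<notin> set (blocks \<beta> v)"
    using Comps_pos[OF b] map_length_blocks[of \<beta> v]
    by (metis image_eqI list.set_map list.size(3) less_irrefl)
  moreover have "concat (blocks \<beta> v) = map (inv v) [1..<Suc n]"
    by (simp add: concat_blocks psum_Comps[OF b] del: upt_Suc)
  moreover have "distinct (map (inv v) [1..<Suc n])"
    using perms_inj[OF perms_inv[OF v]]
    by (simp add: distinct_map inj_on_subset[OF _ subset_UNIV] del: upt_Suc)
  moreover have "set (map (inv v) [1..<Suc n]) = {1..n}"
    using v unfolding perms_def
    by (simp add: permutes_image permutes_inv atLeastLessThanSuc_atLeastAtMost del: upt_Suc)
  ultimately show "list_partition {1..n} (set (blocks \<beta> v))" "distinct (blocks \<beta> v)"
    using list_partition_set_iff[of "blocks \<beta> v" "{1..n}"] by simp_all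
qed

lemma block_sizes_blocks:
  "\<beta> \<in> Comps n \<Longrightarrow> v \<in> perms n \<Longrightarrow> block_sizes (set (blocks \<beta> v)) = mset \<beta>"
  using list_partition_blocks(2) by (simp add: block_sizes_set map_length_blocks)

lemma sorted_wrt_map_upt_iff:
  assumes "transp R"
  shows "sorted_wrt R (map f [a..<b]) \<longleftrightarrow> (\<forall>i. a \<le> i \<and> Suc i < b \<longrightarrow> R (f i) (f (Suc i)))"
proof -
  have "sorted_wrt R (map f [a..<b]) \<longleftrightarrow> (\<forall>k. Suc k < b - a \<longrightarrow> R (f (a + k)) (f (a + Suc k)))"
    by (subst sorted_wrt_iff_nth_Suc_transp[OF assms]) auto
  also have "\<dots> \<longleftrightarrow> (\<forall>i. a \<le> i \<and> Suc i < b \<longrightarrow> R (f i) (f (Suc i)))"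
    by (metis add_Suc_right le_add1 le_add_diff_inverse less_diff_conv add.commute)
  finally show ?thesis .
qed

lemma Des_subset_iff:
  assumes "u \<in> perms n"
  shows "Des n u \<subseteq> I \<longleftrightarrow> (\<forall>i. 1 \<le> i \<and> i \<le> n - 1 \<and> i \<notin> I \<longrightarrow> u i < u (Suc i))"
proof -
  have "u i \<noteq> u (Suc i)" for i
    using perms_inj[OF assms] by (simp add: inj_eq)
  then show ?thesis
    unfolding Des_def by (auto simp: not_less_iff_gr_or_eq)
qed

lemma Des_subset_SetC_iff_blocks_sorted:
  assumes b: "\<beta> \<in> Comps n" and v: "v \<in> perms n" and x: "x \<in> perms n"
  shows "Des n (x \<circ> inv v) \<subseteq> SetC \<beta> \<longleftrightarrow> (\<forall>c\<in>set (blocks \<beta> v). sorted_wrt (\<lambda>i j. x i < x j) c)"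
proof -
  have tr: "transp (\<lambda>i j. x i < (x j::nat))"
    by (auto simp: transp_def)
  have "Des n (x \<circ> inv v) \<subseteq> SetC \<beta> \<longleftrightarrow>
     (\<forall>i. 1 \<le> i \<and> i \<le> n - 1 \<and> i \<notin> SetC \<beta> \<longrightarrow> x (inv v i) < x (inv v (Suc i)))"
    using Des_subset_iff[of "x \<circ> inv v" n] perms_comp perms_inv v x by simp
  also have "\<dots> \<longleftrightarrow> (\<forall>j<length \<beta>. \<forall>i. Suc (psum \<beta> j) \<le> i \<and> Suc i < Suc (psum \<beta> (Suc j)) \<longrightarrow>
      x (inv v i) < x (inv v (Suc i)))"
    unfolding not_in_SetC_iff[OF b] by (simp add: Suc_le_eq) blast
  also have "\<dots> \<longleftrightarrow> (\<forall>c\<in>set (blocks \<beta> v). sorted_wrt (\<lambda>i j. x i < x j) c)"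
    unfolding blocks_def by (auto simp: sorted_wrt_map_upt_iff[OF tr] simp del: upt_Suc)
  finally show ?thesis .
qed

lemma alg_mult_B_perm_elem:
  assumes b: "\<beta> \<in> Comps n" and v: "v \<in> perms n"
  shows "alg_mult n (BI n (SetC \<beta>)) (perm_elem v) = increasing_sum n (set (blocks \<beta> v))"
proof
  fix x :: "nat \<Rightarrow> nat"
  show "alg_mult n (BI n (SetC \<beta>)) (perm_elem v) x = increasing_sum n (set (blocks \<beta> v)) x"
    using Des_subset_SetC_iff_blocks_sorted[OF b v] perms_comp[OF _ perms_inv[OF v]]
    by (simp add: alg_mult_perm_elem[OF v] BI_def increasing_sum_def)
qed

section \<open>Permutations given by words, and left-to-right minima\<close>

definition word_perm :: "nat \<Rightarrow> nat list \<Rightarrow> nat \<Rightarrow> nat" where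
  "word_perm n L u = (if u \<in> {1..n} then L ! (u - 1) else u)"

lemma word_perm_permutes:
  assumes L: "distinct L" "set L = {1..n}"
  shows "word_perm n L permutes {1..n}"
proof (rule bij_imp_permutes)
  have "length L = n"
    using distinct_card[OF L(1)] L(2) by simp
  then have "bij_betw ((!) L) {..<n} {1..n}"
    using bij_betw_nth[OF L(1)] L(2) by simp
  moreover have "bij_betw (\<lambda>u. u - 1) {1..n} {..<n}"
    by (rule bij_betwI[where g = Suc]) auto
  ultimately have "bij_betw ((!) L \<circ> (\<lambda>u. u - 1)) {1..n} {1..n}"
    using bij_betw_trans by blast
  then show "bij_betw (word_perm n L) {1..n} {1..n}"
    by (rule bij_betw_cong[THEN iffD1, rotated]) (simp add: word_perm_def)
qed (auto simp: word_perm_def)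

lemma inv_word_perm:
  assumes "distinct L" "set L = {1..n}"
  shows "inv (word_perm n L) \<in> perms n" "inv (inv (word_perm n L)) = word_perm n L"
  using word_perm_permutes[OF assms] unfolding perms_def
  by (simp_all add: permutes_inv permutes_bij inv_inv_eq)

lemma LRM_iff:
  assumes w: "w \<in> perms n" and i: "i \<in> {1..n}"
  shows "i \<in> LRM n w \<longleftrightarrow> (\<forall>j\<in>{1..<i}. inv w i < inv w j)"
proof -
  have wp: "w permutes {1..n}"
    using w unfolding perms_def by simp
  note w_inv = permutes_inverses[OF wp]
  note inv_in = permutes_in_image[OF permutes_inv[OF wp]]
  show ?thesis
  proof
    assume lrm: "i \<in> LRM n w"
    show "\<forall>j\<in>{1..<i}. inv w i < inv w j"
    proof
      fix j assume j: "j \<in> {1..<i}"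
      show "inv w i < inv w j"
      proof (rule ccontr)
        assume "\<not> inv w i < inv w j"
        moreover have "inv w j \<noteq> inv w i"
          using j w_inv(1)[of i] w_inv(1)[of j] by auto
        moreover have "1 \<le> inv w j"
          using inv_in[of j] j i by auto
        ultimately have "w (inv w j) > i"
          using lrm unfolding LRM_def by auto
        then show False
          using j w_inv(1) by simp
      qed
    qed
  next
    assume min: "\<forall>j\<in>{1..<i}. inv w i < inv w j"
    have "w k > i" if k: "1 \<le> k" "k < inv w i" for k
    proof (rule ccontr)
      assume not_gt: "\<not> w k > i"
      have "inv w i \<le> n"
        using inv_in[of i] i by auto
      then have "w k \<in> {1..n}"
        using k permutes_in_image[OF wp, of k] by auto
      moreover have "w k \<noteq> i"
        using k w_inv(2)[of k] by auto
      ultimately have "inv w i < inv w (w k)"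
        using min not_gt by auto
      then show False
        using k w_inv(2) by simp
    qed
    then show "i \<in> LRM n w"
      using i unfolding LRM_def by auto
  qed
qed

lemma LRM'_inv_word_perm:
  assumes L: "distinct L" "set L = {1..n}"
  shows "LRM' n (inv (word_perm n L)) = {q \<in> {1..<n}. \<forall>t<q. L ! q < L ! t}"
proof -
  let ?w = "inv (word_perm n L)"
  have "Suc q \<in> LRM n ?w \<longleftrightarrow> q < n \<and> (\<forall>t<q. L ! q < L ! t)" for q
  proof (cases "q < n")
    case True
    have "(\<forall>j\<in>{1..<Suc q}. L ! q < L ! (j - 1)) \<longleftrightarrow> (\<forall>t<q. L ! q < L ! t)"
    proof
      assume H: "\<forall>j\<in>{1..<Suc q}. L ! q < L ! (j - 1)"
      show "\<forall>t<q. L ! q < L ! t"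
      proof (intro allI impI)
        fix t assume "t < q"
        then show "L ! q < L ! t"
          using H[THEN bspec, of "Suc t"] by simp
      qed
    qed auto
    then show ?thesis
      using True LRM_iff[OF inv_word_perm(1)[OF L], of "Suc q"]
      by (simp add: inv_word_perm(2)[OF L] word_perm_def)
  qed (simp add: LRM_def)
  moreover have "q \<in> LRM' n ?w \<longleftrightarrow> 1 \<le> q \<and> Suc q \<in> LRM n ?w" for q
    unfolding LRM'_def by force
  ultimately show ?thesis
    by auto
qed

lemma nth_concat_psum:
  "j < length E \<Longrightarrow> r < length (E ! j) \<Longrightarrow> concat E ! (psum (map length E) j + r) = E ! j ! r"
proof (induction E arbitrary: j)
  case (Cons c E)
  then show ?case
    by (cases j) (auto simp: nth_append psum_def)
qed simp

lemma concat_index_decomp: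
  assumes "t < length (concat E)"
  obtains j r where "j < length E" "r < length (E ! j)" "t = psum (map length E) j + r"
proof -
  have "t < psum (map length E) (length E)"
    using assms by (simp add: psum_length length_concat)
  then obtain j where j:
      "j < length E" "psum (map length E) j \<le> t" "t < psum (map length E) (Suc j)"
    using psum_interval_cover[of "length E" "map length E" t] by auto
  then show thesis
    using that[of j "t - psum (map length E) j"] by (simp add: psum_Suc)
qed

lemma prefix_minima_concat:
  assumes E: "\<forall>c\<in>set E. c \<noteq> [] \<and> distinct c \<and> hd c = Min (set c)"
    and heads: "sorted_wrt (\<lambda>c d. hd d < hd c) E"
    and q: "q < length (concat E)"
  shows "(\<forall>t<q. concat E ! q < concat E ! t) \<longleftrightarrow> q \<in> psum (map length E) ` {..<length E}"
proof -
  let ?L = "concat E" and ?p = "psum (map length E)"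
  have pos: "\<forall>a\<in>set (map length E). a > 0"
    using E by auto
  have hd_nth: "?L ! ?p j = E ! j ! 0" if "j < length E" for j
    using nth_concat_psum[OF that, of 0] E that by simp
  have hd_le: "E ! j ! 0 \<le> E ! j ! r" if "j < length E" "r < length (E ! j)" for j r
    using E that by (metis Min_le finite_set hd_conv_nth nth_mem)
  show ?thesis
  proof
    assume min: "\<forall>t<q. ?L ! q < ?L ! t"
    obtain j r where jr: "j < length E" "r < length (E ! j)" "q = ?p j + r"
      using concat_index_decomp[OF q] .
    have "r = 0"
    proof (rule ccontr)
      assume "r \<noteq> 0"
      then have "?L ! q < ?L ! ?p j"
        using min jr(3) by simp
      then have "E ! j ! r < E ! j ! 0"
        using jr nth_concat_psum[OF jr(1,2)] hd_nth[OF jr(1)] by simp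
      then show False
        using hd_le[OF jr(1,2)] by simp
    qed
    then show "q \<in> ?p ` {..<length E}"
      using jr by simp
  next
    assume "q \<in> ?p ` {..<length E}"
    then obtain j where j: "j < length E" "q = ?p j"
      by blast
    show "\<forall>t<q. ?L ! q < ?L ! t"
    proof (intro allI impI)
      fix t assume t: "t < q"
      obtain j' r where jr: "j' < length E" "r < length (E ! j')" "t = ?p j' + r"
        using concat_index_decomp[of t E] t q by auto
      have "j' < j"
        using psum_less_iff[OF pos, of j' j] jr t j by simp
      then have "E ! j ! 0 < E ! j' ! 0"
        using sorted_wrt_nth_less[OF heads] j E jr(1) by (auto simp: hd_conv_nth)
      also have "\<dots> \<le> E ! j' ! r"
        using hd_le[OF jr(1,2)] .
      finally show "?L ! q < ?L ! t"
        using j jr hd_nth[OF j(1)] nth_concat_psum[OF jr(1,2)] by simp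
    qed
  qed
qed

lemma LRM'_inv_word_perm_concat:
  assumes part: "list_partition {1..n} (set E)" "distinct E"
    and heads_min: "\<forall>c\<in>set E. hd c = Min (set c)"
    and heads: "sorted_wrt (\<lambda>c d. hd d < hd c) E"
  shows "LRM' n (inv (word_perm n (concat E))) = SetC (map length E)"
proof -
  let ?p = "psum (map length E)"
  have E: "\<forall>c\<in>set E. c \<noteq> [] \<and> distinct c \<and> hd c = Min (set c)"
    using part(1) heads_min by (simp add: list_partition_def)
  note L = list_partition_concat[OF part]
  then have len: "length (concat E) = n"
    using distinct_card by fastforce
  have pos: "\<forall>a\<in>set (map length E). a > 0"
    using E by auto
  have pn: "?p (length E) = n"
    using len by (simp add: psum_length length_concat)
  have SetC_range: "1 \<le> q \<and> q < n" if q: "q \<in> SetC (map length E)" for q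
  proof -
    obtain j where "1 \<le> j" "j < length E" "q = ?p j"
      using q unfolding SetC_psum by auto
    then show ?thesis
      using psum_strict_mono[OF pos, of 0 j] psum_strict_mono[OF pos, of j "length E"] pn by simp
  qed
  have "q \<in> ?p ` {..<length E} \<longleftrightarrow> q \<in> SetC (map length E)" if "1 \<le> q" for q
  proof
    assume "q \<in> ?p ` {..<length E}"
    then obtain j where "j < length E" "q = ?p j"
      by blast
    moreover have "j \<noteq> 0"
      using that calculation by (cases j) auto
    ultimately show "q \<in> SetC (map length E)"
      unfolding SetC_psum by force
  next
    assume "q \<in> SetC (map length E)"
    then show "q \<in> ?p ` {..<length E}"
      unfolding SetC_psum by auto
  qed
  then have "(\<forall>t<q. concat E ! q < concat E ! t) \<longleftrightarrow> q \<in> SetC (map length E)"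
    if "q \<in> {1..<n}" for q
    using prefix_minima_concat[OF E heads, of q] that len by simp
  then show ?thesis
    unfolding LRM'_inv_word_perm[OF L] using SetC_range by auto
qed

lemma blocks_inv_word_perm_concat:
  assumes "distinct (concat E)" "set (concat E) = {1..n}"
  shows "blocks (map length E) (inv (word_perm n (concat E))) = E"
proof (rule nth_equalityI)
  fix j assume "j < length (blocks (map length E) (inv (word_perm n (concat E))))"
  then have j: "j < length E"
    by simp
  let ?p = "psum (map length E)"
  have sj: "?p (Suc j) = ?p j + length (E ! j)"
    using j by (simp add: psum_Suc)
  have "?p (Suc j) \<le> length (concat E)"
    using psum_mono[of "Suc j" "length E" "map length E"] j by (simp add: psum_length length_concat)
  then have "?p (Suc j) \<le> n"
    using assms distinct_card by fastforce
  then show "blocks (map length E) (inv (word_perm n (concat E))) ! j = E ! j"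
    using j sj nth_concat_psum[OF j]
    by (intro nth_equalityI)
      (simp_all add: nth_blocks inv_word_perm(2)[OF assms] word_perm_def del: upt_Suc)
qed simp

lemma increasing_sum_eq_alg_mult_B:
  assumes "list_partition {1..n} (set E)" "distinct E"
  shows "increasing_sum n (set E) =
    alg_mult n (BI n (SetC (map length E))) (perm_elem (inv (word_perm n (concat E))))"
proof -
  note L = list_partition_concat[OF assms]
  from alg_mult_B_perm_elem[OF list_partition_lengths_Comps[OF assms] inv_word_perm(1)[OF L]]
  show ?thesis
    unfolding blocks_inv_word_perm_concat[OF L] by (rule sym)
qed

section \<open>Shuffles\<close>

lemma sorted_wrt_shuffle_parts:
  assumes "set a \<inter> set b = {}" "s \<in> shuffles a b" "sorted_wrt R s"
  shows "sorted_wrt R a \<and> sorted_wrt R b"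
  using sorted_wrt_filter[OF assms(3)] filter_shuffles_disjoint1[OF assms(1,2)] by metis

lemma sorted_shuffle_unique:
  assumes x: "inj x" and s: "s1 \<in> shuffles a b" "s2 \<in> shuffles a b"
    and sorted: "sorted_wrt (\<lambda>i j. x i < (x j :: nat)) s1" "sorted_wrt (\<lambda>i j. x i < x j) s2"
  shows "s1 = s2"
proof -
  have "sorted_wrt (<) (map x s1)" "sorted_wrt (<) (map x s2)"
    using sorted by (simp_all add: sorted_wrt_map)
  moreover have "set (map x s2) = set (map x s1)"
    using set_shuffles[OF s(1)] set_shuffles[OF s(2)] by simp
  ultimately have "map x s2 = map x s1"
    by (rule strict_sorted_equal)
  then show ?thesis
    using x by (simp add: inj_map_eq_map)
qed

lemma sorted_shuffle_exists:
  assumes x: "inj x" and ab: "set a \<inter> set b = {}"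
    and sorted: "sorted_wrt (\<lambda>i j. x i < (x j :: nat)) a" "sorted_wrt (\<lambda>i j. x i < x j) b"
  shows "sort_key x (a @ b) \<in> shuffles a b" "sorted_wrt (\<lambda>i j. x i < x j) (sort_key x (a @ b))"
proof -
  let ?s = "sort_key x (a @ b)"
  have strict: "sorted_wrt (<) (map x a)" "sorted_wrt (<) (map x b)"
    using sorted by (simp_all add: sorted_wrt_map)
  have "filter (\<lambda>y. y \<in> set a) b = []" "filter (\<lambda>y. y \<notin> set a) b = b"
    using ab by (auto simp: filter_empty_conv filter_id_conv)
  then have "filter (\<lambda>y. y \<in> set a) ?s = a" "filter (\<lambda>y. y \<notin> set a) ?s = b"
    using strict by (simp_all add: filter_sort sort_key_id_if_sorted strict_sorted_imp_sorted)
  then show "?s \<in> shuffles a b"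
    using partition_in_shuffles[of ?s "\<lambda>y. y \<in> set a"] by simp
  have "distinct (a @ b)"
    using strict ab by (auto simp: strict_sorted_iff distinct_map)
  then have "distinct (map x ?s)"
    using inj_on_subset[OF x subset_UNIV] distinct_map distinct_sort by blast
  then have "sorted_wrt (<) (map x ?s)"
    by (simp add: strict_sorted_iff)
  then show "sorted_wrt (\<lambda>i j. x i < x j) ?s"
    by (simp add: sorted_wrt_map)
qed

lemma increasing_sum_shuffles:
  assumes ab: "set a \<inter> set b = {}"
  shows "(increasing_sum n (insert a (insert b \<Psi>)) :: (nat \<Rightarrow> nat) \<Rightarrow> 'k::comm_ring_1) =
    (\<Sum>s\<in>shuffles a b. increasing_sum n (insert s \<Psi>))"
proof
  fix x :: "nat \<Rightarrow> nat"
  let ?sorted = "\<lambda>c. sorted_wrt (\<lambda>i j. x i < x j) c"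
  show "(increasing_sum n (insert a (insert b \<Psi>)) x :: 'k) =
      (\<Sum>s\<in>shuffles a b. increasing_sum n (insert s \<Psi>)) x"
  proof (cases "x \<in> perms n \<and> (\<forall>c\<in>\<Psi>. ?sorted c) \<and> ?sorted a \<and> ?sorted b")
    case True
    let ?s0 = "sort_key x (a @ b)"
    note s0 = sorted_shuffle_exists[OF perms_inj ab, of x n]
    have single: "increasing_sum n (insert s \<Psi>) x = (if s = ?s0 then 1 else 0 :: 'k)"
      if "s \<in> shuffles a b" for s
      using True s0 sorted_shuffle_unique[OF perms_inj[of x n] that]
      unfolding increasing_sum_def by auto
    have "increasing_sum n (insert a (insert b \<Psi>)) x = (1 :: 'k)"
      using True by (simp add: increasing_sum_def)
    also have "\<dots> = (\<Sum>s\<in>shuffles a b. if s = ?s0 then 1 else 0)"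
      using s0 True by simp
    also have "\<dots> = (\<Sum>s\<in>shuffles a b. increasing_sum n (insert s \<Psi>)) x"
      unfolding sum_fun_apply using single by (intro sum.cong) auto
    finally show ?thesis .
  next
    case False
    then have "increasing_sum n (insert s \<Psi>) x = (0 :: 'k)" if "s \<in> shuffles a b" for s
      using sorted_wrt_shuffle_parts[OF ab that] unfolding increasing_sum_def by auto
    then have "(\<Sum>s\<in>shuffles a b. increasing_sum n (insert s \<Psi>)) x = (0 :: 'k)"
      by (simp add: sum_fun_apply)
    moreover have "increasing_sum n (insert a (insert b \<Psi>)) x = (0 :: 'k)"
      using False by (auto simp: increasing_sum_def)
    ultimately show ?thesis
      by simp
  qed
qed

section \<open>The merge order on multisets of block sizes\<close>

definition merge_step :: "nat multiset \<Rightarrow> nat multiset \<Rightarrow> bool" where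
  "merge_step M N \<longleftrightarrow> (\<exists>L a b. M = add_mset a (add_mset b L) \<and> N = add_mset (a + b) L)"

abbreviation merges :: "nat multiset \<Rightarrow> nat multiset \<Rightarrow> bool" where
  "merges \<equiv> merge_step\<^sup>*\<^sup>*"

lemma merge_stepI: "merge_step (add_mset a (add_mset b L)) (add_mset (a + b) L)"
  unfolding merge_step_def by blast

lemma part_le_mset_eq:
  assumes "mset xs = mset ys"
  shows "part_le xs ys"
proof -
  obtain p where p: "p permutes {..<length ys}" "permute_list p ys = xs"
    using mset_eq_permutation[OF assms] by blast
  have len: "length xs = length ys"
    using p(2) by auto
  show ?thesis
    unfolding part_le_def
  proof (intro exI[of _ p] conjI allI impI)
    fix i assume "i < length xs"
    then show "p i < length ys"
      using len permutes_in_image[OF p(1)] by simp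
  next
    fix j assume j: "j < length ys"
    have ij: "inv p j < length ys"
      using permutes_in_image[OF permutes_inv[OF p(1)]] j by simp
    have "{i. i < length xs \<and> p i = j} = {inv p j}"
      using permutes_inverses[OF p(1)] ij len by auto
    moreover have "xs ! inv p j = ys ! j"
      using p ij permute_list_nth permutes_inverses(1)[OF p(1)] by metis
    ultimately show "ys ! j = (\<Sum>i\<in>{i. i < length xs \<and> p i = j}. xs ! i)"
      by simp
  qed
qed

lemma part_le_trans:
  assumes "part_le a b" "part_le b c"
  shows "part_le a c"
proof -
  obtain f where f: "\<forall>i<length a. f i < length b"
    "\<forall>j<length b. b ! j = (\<Sum>i\<in>{i. i < length a \<and> f i = j}. a ! i)"
    using assms(1) unfolding part_le_def by blast
  obtain g where g: "\<forall>i<length b. g i < length c"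
    "\<forall>j<length c. c ! j = (\<Sum>i\<in>{i. i < length b \<and> g i = j}. b ! i)"
    using assms(2) unfolding part_le_def by blast
  show ?thesis
    unfolding part_le_def
  proof (intro exI[of _ "g \<circ> f"] conjI allI impI)
    fix i assume "i < length a"
    then show "(g \<circ> f) i < length c"
      using f g by simp
  next
    fix k assume k: "k < length c"
    let ?S = "{i. i < length a \<and> (g \<circ> f) i = k}" and ?T = "{j. j < length b \<and> g j = k}"
    have "sum ((!) a) ?S = (\<Sum>j\<in>?T. sum ((!) a) {i. i \<in> ?S \<and> f i = j})"
      by (rule sum.group[symmetric]) (use f in auto)
    also have "\<dots> = (\<Sum>j\<in>?T. sum ((!) a) {i. i < length a \<and> f i = j})"
      by (intro sum.cong arg_cong[where f = "sum _"]) auto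
    also have "\<dots> = (\<Sum>j\<in>?T. b ! j)"
      using f by simp
    also have "\<dots> = c ! k"
      using g k by simp
    finally show "c ! k = (\<Sum>i\<in>?S. a ! i)"
      by simp
  qed
qed

lemma part_le_merge_Cons: "part_le (a # b # L) ((a + b) # L)"
  unfolding part_le_def
proof (intro exI[of _ "\<lambda>i. i - 1"] conjI allI impI)
  fix j assume j: "j < length ((a + b) # L)"
  have "{i. i < length (a # b # L) \<and> i - 1 = j} = (if j = 0 then {0, 1} else {Suc j})"
    using j by auto
  then show "((a + b) # L) ! j = (\<Sum>i\<in>{i. i < length (a # b # L) \<and> i - 1 = j}. (a # b # L) ! i)"
    by (cases j) simp_all
qed simp

lemma merges_imp_part_le:
  assumes "merges M N"
  shows "mset lam = M \<Longrightarrow> mset ms = N \<Longrightarrow> part_le lam ms"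
  using assms
proof (induction arbitrary: ms rule: rtranclp_induct)
  case base
  then show ?case
    by (intro part_le_mset_eq) simp
next
  case (step N N')
  obtain L a b where N: "N = add_mset a (add_mset b L)" and N': "N' = add_mset (a + b) L"
    using step.hyps(2) unfolding merge_step_def by blast
  obtain ls where ls: "mset ls = L"
    using ex_mset by blast
  have "part_le lam (a # b # ls)"
    using step.IH[of "a # b # ls"] step.prems(1) N ls by simp
  moreover have "part_le ((a + b) # ls) ms"
    using step.prems(2) N' ls by (intro part_le_mset_eq) simp
  ultimately show ?case
    using part_le_trans part_le_merge_Cons by blast
qed

lemma merges_add_right:
  assumes "merges A B"
  shows "merges (A + C) (B + C)"
  using assms
proof (induction rule: rtranclp_induct)
  case (step B B')
  then obtain L a b where "B = add_mset a (add_mset b L)" "B' = add_mset (a + b) L"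
    unfolding merge_step_def by blast
  then have "merge_step (B + C) (B' + C)"
    using merge_stepI[of a b "L + C"] by simp
  with step.IH show ?case
    by (rule rtranclp.rtrancl_into_rtrancl)
qed simp

lemma merges_sum:
  assumes "finite J" "\<And>j. j \<in> J \<Longrightarrow> merges (A j) (B j)"
  shows "merges (\<Sum>j\<in>J. A j) (\<Sum>j\<in>J. B j)"
  using assms
proof (induction J rule: finite_induct)
  case (insert x F)
  have "merges (A x + (\<Sum>j\<in>F. A j)) (B x + (\<Sum>j\<in>F. A j))"
    using merges_add_right insert.prems by blast
  moreover have "merges ((\<Sum>j\<in>F. A j) + B x) ((\<Sum>j\<in>F. B j) + B x)"
    using merges_add_right[OF insert.IH] insert.prems by blast
  then have "merges (B x + (\<Sum>j\<in>F. A j)) (B x + (\<Sum>j\<in>F. B j))"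
    by (simp add: add.commute)
  ultimately show ?case
    using insert.hyps rtranclp_trans by fastforce
qed simp

lemma merges_singleton: "G \<noteq> {#} \<Longrightarrow> merges G {#sum_mset G#}"
proof (induction G)
  case (add x G)
  show ?case
  proof (cases "G = {#}")
    case False
    then have "merges (G + {#x#}) ({#sum_mset G#} + {#x#})"
      using add.IH merges_add_right by blast
    moreover have "merge_step ({#sum_mset G#} + {#x#}) {#sum_mset (add_mset x G)#}"
      using merge_stepI[of "sum_mset G" x "{#}"] by (simp add: add.commute)
    ultimately show ?thesis
      by (simp add: rtranclp.rtrancl_into_rtrancl)
  qed simp
qed simp

lemma mset_eq_sum_filter:
  "\<forall>i\<in>set xs. f i < (m::nat) \<Longrightarrow> mset xs = (\<Sum>j<m. mset (filter (\<lambda>i. f i = j) xs))"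
proof (induction xs)
  case (Cons x xs)
  have "(\<Sum>j<m. mset (filter (\<lambda>i. f i = j) (x # xs))) =
      (\<Sum>j<m. mset (filter (\<lambda>i. f i = j) xs) + (if f x = j then {#x#} else {#}))"
    by (rule sum.cong) auto
  also have "\<dots> = (\<Sum>j<m. mset (filter (\<lambda>i. f i = j) xs)) + (\<Sum>j<m. if f x = j then {#x#} else {#})"
    by (rule sum.distrib)
  also have "(\<Sum>j<m. if f x = j then {#x#} else {#}) = {#x#}"
    using Cons.prems by (subst sum.delta') auto
  finally show ?case
    using Cons by simp
qed simp

lemma image_mset_sum: "finite J \<Longrightarrow> image_mset g (\<Sum>j\<in>J. M j) = (\<Sum>j\<in>J. image_mset g (M j))"
  by (induction J rule: finite_induct) auto

lemma part_le_imp_merges: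
  assumes le: "part_le lam ms" and pos: "\<forall>a\<in>set ms. a > 0"
  shows "merges (mset lam) (mset ms)"
proof -
  let ?l = "length lam" and ?m = "length ms"
  obtain f where f: "\<forall>i<?l. f i < ?m" "\<forall>j<?m. ms ! j = (\<Sum>i\<in>{i. i < ?l \<and> f i = j}. lam ! i)"
    using le unfolding part_le_def by blast
  define G where "G j = image_mset ((!) lam) (mset (filter (\<lambda>i. f i = j) [0..<?l]))" for j
  have "mset lam = image_mset ((!) lam) (mset [0..<?l])"
    by (metis map_nth mset_map)
  also have "mset [0..<?l] = (\<Sum>j<?m. mset (filter (\<lambda>i. f i = j) [0..<?l]))"
    using f(1) by (intro mset_eq_sum_filter) auto
  finally have lam: "mset lam = (\<Sum>j<?m. G j)"
    unfolding G_def by (simp add: image_mset_sum)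
  have "mset ms = image_mset ((!) ms) (mset [0..<?m])"
    by (metis map_nth mset_map)
  also have "mset [0..<?m] = (\<Sum>j<?m. {#j#})"
    by (simp add: mset_set_upto_eq_mset_upto)
  also have "image_mset ((!) ms) (\<Sum>j<?m. {#j#}) = (\<Sum>j<?m. image_mset ((!) ms) {#j#})"
    by (rule image_mset_sum) simp
  finally have ms: "mset ms = (\<Sum>j<?m. {#ms ! j#})"
    by simp
  have "sum_mset (G j) = ms ! j" if j: "j < ?m" for j
  proof -
    have "sum_mset (G j) = sum_list (map ((!) lam) (filter (\<lambda>i. f i = j) [0..<?l]))"
      unfolding G_def by (metis mset_map sum_mset_sum_list)
    also have "\<dots> = sum ((!) lam) (set (filter (\<lambda>i. f i = j) [0..<?l]))"
      by (rule sum_list_distinct_conv_sum_set) simp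
    also have "set (filter (\<lambda>i. f i = j) [0..<?l]) = {i. i < ?l \<and> f i = j}"
      by auto
    finally show ?thesis
      using f(2) j by simp
  qed
  moreover have "G j \<noteq> {#}" if "j < ?m" for j
    using calculation[OF that] pos that by (metis nth_mem not_less_zero sum_mset.empty)
  ultimately have "merges (G j) {#ms ! j#}" if "j < ?m" for j
    using merges_singleton that by metis
  then have "merges (\<Sum>j<?m. G j) (\<Sum>j<?m. {#ms ! j#})"
    by (intro merges_sum) auto
  then show ?thesis
    using lam ms by simp
qed

lemma part_le_iff_merges:
  "\<forall>a\<in>set ms. a > 0 \<Longrightarrow> part_le lam ms \<longleftrightarrow> merges (mset lam) (mset ms)"
  using part_le_imp_merges merges_imp_part_le by blast

lemma part_le_underlying_partition_iff:
  assumes "\<alpha> \<in> Comps n"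
  shows "part_le (underlying_partition \<beta>) (underlying_partition \<alpha>) \<longleftrightarrow> merges (mset \<beta>) (mset \<alpha>)"
  using part_le_iff_merges[of "underlying_partition \<alpha>" "underlying_partition \<beta>"] Comps_pos[OF assms]
  unfolding underlying_partition_def by simp

lemma list_partition_replace:
  assumes part: "list_partition S (\<Phi> \<union> \<Psi>)" and disj: "\<Phi> \<inter> \<Psi> = {}"
    and new: "list_partition (\<Union>(set ` \<Phi>)) \<Phi>'"
  shows "list_partition S (\<Phi>' \<union> \<Psi>)" "\<Phi>' \<inter> \<Psi> = {}"
proof -
  have old_disj: "set e \<inter> set d = {}" if "e \<in> \<Phi>" "d \<in> \<Psi>" for e d
  proof -
    have "e \<noteq> d"
      using disj that by blast
    then show ?thesis
      using part that unfolding list_partition_def by simp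
  qed
  have sep: "set c \<inter> set d = {}" if "c \<in> \<Phi>'" "d \<in> \<Psi>" for c d
  proof -
    have "set c \<subseteq> \<Union>(set ` \<Phi>)"
      using new that(1) unfolding list_partition_def by auto
    then show ?thesis
      using old_disj that(2) by auto
  qed
  have "c \<notin> \<Psi>" if "c \<in> \<Phi>'" for c
  proof
    assume "c \<in> \<Psi>"
    then have "set c = {}"
      using sep[OF that, of c] by simp
    moreover have "c \<noteq> []"
      using new that unfolding list_partition_def by simp
    ultimately show False
      by simp
  qed
  then show "\<Phi>' \<inter> \<Psi> = {}"
    by blast
  have "\<Union>(set ` (\<Phi>' \<union> \<Psi>)) = \<Union>(set ` (\<Phi> \<union> \<Psi>))"
    using new unfolding list_partition_def by auto
  moreover have "set c \<inter> set d = {}" if "c \<in> \<Phi>' \<union> \<Psi>" "d \<in> \<Phi>' \<union> \<Psi>" "c \<noteq> d" for c d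
  proof -
    have "\<forall>c\<in>\<Phi>'. \<forall>d\<in>\<Phi>'. c \<noteq> d \<longrightarrow> set c \<inter> set d = {}"
      "\<forall>c\<in>\<Psi>. \<forall>d\<in>\<Psi>. c \<noteq> d \<longrightarrow> set c \<inter> set d = {}"
      using part new unfolding list_partition_def by simp_all
    then show ?thesis
      using that sep[of c d] sep[of d c] by blast
  qed
  ultimately show "list_partition S (\<Phi>' \<union> \<Psi>)"
    using part new unfolding list_partition_def by auto
qed

lemma block_sizes_insert:
  "finite \<Phi> \<Longrightarrow> c \<notin> \<Phi> \<Longrightarrow> block_sizes (insert c \<Phi>) = add_mset (length c) (block_sizes \<Phi>)"
  unfolding block_sizes_def by simp

lemma block_sizes_add_mset_E:
  assumes "finite \<Phi>" "block_sizes \<Phi> = add_mset a M"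
  obtains c \<Psi> where "\<Phi> = insert c \<Psi>" "c \<notin> \<Psi>" "length c = a" "block_sizes \<Psi> = M"
proof -
  obtain c where c: "c \<in> \<Phi>" "length c = a"
    using assms unfolding block_sizes_def
    by (metis finite_set_mset_mset_set image_iff set_image_mset union_single_eq_member)
  then have "block_sizes (\<Phi> - {c}) = M"
    using assms block_sizes_insert[of "\<Phi> - {c}" c] by (simp add: insert_absorb)
  then show thesis
    using that[of c "\<Phi> - {c}"] c by (simp add: insert_absorb)
qed

lemma list_partition_split_block:
  assumes part: "list_partition S \<Phi>" and c: "A @ B \<in> \<Phi>" and AB: "A \<noteq> []" "B \<noteq> []"
  shows "list_partition S (insert A (insert B (\<Phi> - {A @ B})))"
    and "A \<notin> insert B (\<Phi> - {A @ B})" "B \<notin> \<Phi> - {A @ B}" "set A \<inter> set B = {}"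
    and "merge_step (block_sizes (insert A (insert B (\<Phi> - {A @ B})))) (block_sizes \<Phi>)"
proof -
  let ?\<Psi> = "\<Phi> - {A @ B}"
  let ?\<Phi>' = "insert A (insert B ?\<Psi>)"
  have part': "list_partition S ({A @ B} \<union> ?\<Psi>)"
    using part c by (simp add: insert_absorb)
  have dAB: "distinct (A @ B)"
    using list_partition_block[OF part c] by blast
  then show disj: "set A \<inter> set B = {}"
    by simp
  have "A \<noteq> B"
    using disj AB(1) by auto
  then have "list_partition (set (A @ B)) {A, B}"
    using AB dAB unfolding list_partition_def by auto
  then have new: "list_partition S ({A, B} \<union> ?\<Psi>)" "{A, B} \<inter> ?\<Psi> = {}"
    using list_partition_replace[OF part', of "{A, B}"] by simp_all
  then show "list_partition S ?\<Phi>'" "A \<notin> insert B ?\<Psi>" "B \<notin> ?\<Psi>"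
    using \<open>A \<noteq> B\<close> by auto
  have fin: "finite ?\<Psi>"
    using part by (simp add: list_partition_def)
  have "block_sizes ?\<Phi>' = add_mset (length A) (add_mset (length B) (block_sizes ?\<Psi>))"
    using new(2) \<open>A \<noteq> B\<close> fin by (simp add: block_sizes_insert)
  moreover have "block_sizes \<Phi> = add_mset (length A + length B) (block_sizes ?\<Psi>)"
    using c fin block_sizes_insert[of ?\<Psi> "A @ B"] by (simp add: insert_absorb)
  ultimately show "merge_step (block_sizes ?\<Phi>') (block_sizes \<Phi>)"
    using merge_stepI by simp
qed

lemma list_partition_replace_block:
  assumes part: "list_partition S \<Phi>" and c: "c \<in> \<Phi>" and s: "distinct s" "set s = set c"
  shows "list_partition S (insert s (\<Phi> - {c}))" "s \<notin> \<Phi> - {c}"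
    and "block_sizes (insert s (\<Phi> - {c})) = block_sizes \<Phi>"
proof -
  let ?\<Psi> = "\<Phi> - {c}"
  have part': "list_partition S ({c} \<union> ?\<Psi>)"
    using part c by (simp add: insert_absorb)
  have "c \<noteq> []" "distinct c"
    using list_partition_block[OF part c] by simp_all
  then have "s \<noteq> []"
    using s(2) by auto
  then have "list_partition (set c) {s}"
    using s by (simp add: list_partition_def)
  then show "list_partition S (insert s ?\<Psi>)" "s \<notin> ?\<Psi>"
    using list_partition_replace[OF part', of "{s}"] by simp_all
  have "length s = length c"
    using s \<open>distinct c\<close> by (metis distinct_card)
  moreover have "finite ?\<Psi>"
    using part by (simp add: list_partition_def)
  ultimately show "block_sizes (insert s ?\<Psi>) = block_sizes \<Phi>"
    using \<open>s \<notin> ?\<Psi>\<close> c block_sizes_insert[of ?\<Psi> s] block_sizes_insert[of ?\<Psi> c]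
    by (simp add: insert_absorb)
qed

lemma list_partition_merge_blocks:
  assumes part: "list_partition S (insert c1 (insert c2 \<Psi>))" and new: "c1 \<notin> insert c2 \<Psi>" "c2 \<notin> \<Psi>"
  shows "set c1 \<inter> set c2 = {}"
    and "s \<in> shuffles c1 c2 \<Longrightarrow> list_partition S (insert s \<Psi>) \<and> s \<notin> \<Psi>"
proof -
  have c: "c1 \<noteq> []" "distinct c1" "distinct c2"
    using list_partition_block[OF part] by simp_all
  have "c1 \<noteq> c2"
    using new by auto
  then show disj: "set c1 \<inter> set c2 = {}"
    using part unfolding list_partition_def by blast
  assume s: "s \<in> shuffles c1 c2"
  have "s \<noteq> []"
    using s c(1) Nil_in_shuffles by metis
  then have "list_partition (\<Union>(set ` {c1, c2})) {s}"
    using set_shuffles[OF s] distinct_disjoint_shuffles[OF c(2,3) disj s]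
    unfolding list_partition_def by (intro conjI) auto
  moreover have "list_partition S ({c1, c2} \<union> \<Psi>)" "{c1, c2} \<inter> \<Psi> = {}"
    using part new by auto
  ultimately show "list_partition S (insert s \<Psi>) \<and> s \<notin> \<Psi>"
    using list_partition_replace[of S "{c1, c2}" \<Psi> "{s}"] by simp
qed

lemma increasing_sum_in_span_merged:
  assumes "merges M N" "list_partition {1..n} \<Phi>" "block_sizes \<Phi> = M"
  shows "(increasing_sum n \<Phi> :: (nat \<Rightarrow> nat) \<Rightarrow> 'k::comm_ring_1) \<in>
    fun_module.span {increasing_sum n \<Psi> | \<Psi>. list_partition {1..n} \<Psi> \<and> block_sizes \<Psi> = N}"
  using assms
proof (induction arbitrary: \<Phi> rule: converse_rtranclp_induct)
  case base
  then show ?case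
    by (auto intro: fun_module.span_base)
next
  case (step M M')
  obtain L a b where M: "M = add_mset a (add_mset b L)" and M': "M' = add_mset (a + b) L"
    using step.hyps(1) unfolding merge_step_def by blast
  have fin: "finite \<Phi>"
    using step.prems(1) unfolding list_partition_def by blast
  obtain c1 \<Phi>1 where \<Phi>1:
      "\<Phi> = insert c1 \<Phi>1" "c1 \<notin> \<Phi>1" "length c1 = a" "block_sizes \<Phi>1 = add_mset b L"
    using block_sizes_add_mset_E[OF fin step.prems(2)[unfolded M]] .
  have "finite \<Phi>1"
    using fin \<Phi>1(1) by simp
  obtain c2 \<Psi> where \<Psi>: "\<Phi>1 = insert c2 \<Psi>" "c2 \<notin> \<Psi>" "length c2 = b" "block_sizes \<Psi> = L"
    using block_sizes_add_mset_E[OF \<open>finite \<Phi>1\<close> \<Phi>1(4)] .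
  note part = step.prems(1)[unfolded \<Phi>1(1) \<Psi>(1)]
  note new = \<Phi>1(2)[unfolded \<Psi>(1)] \<Psi>(2)
  have "(increasing_sum n \<Phi> :: (nat \<Rightarrow> nat) \<Rightarrow> 'k) =
      (\<Sum>s\<in>shuffles c1 c2. increasing_sum n (insert s \<Psi>))"
    unfolding \<Phi>1(1) \<Psi>(1)
    by (rule increasing_sum_shuffles[OF list_partition_merge_blocks(1)[OF part new]])
  also have "\<dots> \<in>
      fun_module.span {increasing_sum n \<Psi> | \<Psi>. list_partition {1..n} \<Psi> \<and> block_sizes \<Psi> = N}"
  proof (rule fun_module.span_sum)
    fix s assume s: "s \<in> shuffles c1 c2"
    note merged = list_partition_merge_blocks(2)[OF part new s, THEN conjunct1]
      list_partition_merge_blocks(2)[OF part new s, THEN conjunct2]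
    have "block_sizes (insert s \<Psi>) = M'"
      using block_sizes_insert[of \<Psi> s] fin \<Phi>1(1) \<Psi> \<Phi>1(3) length_shuffles[OF s] merged(2) M'
      by auto
    then show "(increasing_sum n (insert s \<Psi>) :: (nat \<Rightarrow> nat) \<Rightarrow> 'k) \<in>
        fun_module.span {increasing_sum n \<Psi> | \<Psi>. list_partition {1..n} \<Psi> \<and> block_sizes \<Psi> = N}"
      using step.IH merged(1) by simp
  qed
  finally show ?case .
qed

section \<open>Straightening\<close>

lemma increasing_sum_split_block:
  assumes "set A \<inter> set B = {}"
  shows "(increasing_sum n (insert (A @ B) \<Psi>) :: (nat \<Rightarrow> nat) \<Rightarrow> 'k::comm_ring_1) =
    increasing_sum n (insert A (insert B \<Psi>)) -
      (\<Sum>s\<in>shuffles A B - {A @ B}. increasing_sum n (insert s \<Psi>))"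
proof -
  have "A @ B \<in> shuffles A B"
    by (induction A) (auto intro: Cons_in_shuffles_leftI)
  then show ?thesis
    unfolding increasing_sum_shuffles[OF assms] by (simp add: sum.remove)
qed

definition min_pos :: "nat list \<Rightarrow> nat" where
  "min_pos c = length (takeWhile (\<lambda>y. y \<noteq> Min (set c)) c)"

text \<open>Cutting a block in front of its minimum, or replacing it by another shuffle of the two
  pieces, lowers the weight of the partition.\<close>

definition block_weight :: "nat list \<Rightarrow> nat" where
  "block_weight c = length c * length c + min_pos c"

lemma split_before_min:
  assumes "c \<noteq> []" "hd c \<noteq> Min (set c)"
  obtains A B where "c = A @ B" "A \<noteq> []" "B \<noteq> []" "hd B = Min (set c)" "Min (set c) \<notin> set A"
proof -
  let ?m = "Min (set c)"
  let ?A = "takeWhile (\<lambda>y. y \<noteq> ?m) c" and ?B = "dropWhile (\<lambda>y. y \<noteq> ?m) c"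
  have "?m \<in> set c"
    using assms(1) by simp
  then have B: "?B \<noteq> []" "hd ?B = ?m"
    using hd_dropWhile[of "\<lambda>y. y \<noteq> ?m" c] by (auto simp: dropWhile_eq_Nil_conv)
  moreover have "?A \<noteq> []"
    using B assms(2) by (metis append_Nil takeWhile_dropWhile_id)
  moreover have "?m \<notin> set ?A"
    by (metis (mono_tags) set_takeWhileD)
  ultimately show thesis
    using that[of ?A ?B] by simp
qed

lemma takeWhile_shuffle_less:
  assumes "m \<notin> set A" "B \<noteq> []" "hd B = m" "s \<in> shuffles A B" "s \<noteq> A @ B"
  shows "length (takeWhile (\<lambda>y. y \<noteq> m) s) < length A"
  using assms
proof (induction A arbitrary: s)
  case (Cons p A)
  obtain z zs where s: "s = z # zs"
    using Cons.prems(2,4) by (cases s) auto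
  from Cons.prems(2,4) s
  have "(z = p \<and> zs \<in> shuffles A B) \<or> (z = m \<and> zs \<in> shuffles (p # A) (tl B))"
    using Cons.prems(3) by (auto simp: Cons_in_shuffles_iff)
  then show ?case
  proof
    assume "z = p \<and> zs \<in> shuffles A B"
    moreover from this have "zs \<noteq> A @ B"
      using Cons.prems(5) s by simp
    ultimately show ?case
      using Cons.IH[of zs] Cons.prems(1-3) s by auto
  qed (simp add: s)
qed simp

lemma block_weight_split:
  assumes AB: "c = A @ B" "A \<noteq> []" "B \<noteq> []" "hd B = Min (set c)" "Min (set c) \<notin> set A"
  shows "block_weight A + block_weight B < block_weight c"
    and "s \<in> shuffles A B \<Longrightarrow> s \<noteq> c \<Longrightarrow> block_weight s < block_weight c"
proof -
  let ?m = "Min (set c)"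
  have "takeWhile (\<lambda>y. y \<noteq> ?m) (A @ B) = A @ takeWhile (\<lambda>y. y \<noteq> ?m) B"
    by (rule takeWhile_append2) (use AB(5) in auto)
  moreover have "takeWhile (\<lambda>y. y \<noteq> ?m) B = []"
    using AB(3,4) by (cases B) auto
  ultimately have mc: "min_pos c = length A"
    unfolding min_pos_def using AB(1) by simp
  have "Min (set B) = ?m"
  proof (rule Min_eqI)
    show "?m \<in> set B"
      using AB(3,4) hd_in_set by metis
    show "?m \<le> y" if "y \<in> set B" for y
      using that AB(1) by simp
  qed simp
  then have mB: "min_pos B = 0"
    using AB unfolding min_pos_def by (cases B) auto
  have mA: "min_pos A \<le> length A"
    unfolding min_pos_def by (rule length_takeWhile_le)
  have pos: "length A * length B > 0"
    using AB by simp
  show "block_weight A + block_weight B < block_weight c"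
    unfolding block_weight_def using AB(1) mc mB
    by (simp add: algebra_simps) (use mA pos in linarith)
  assume s: "s \<in> shuffles A B" "s \<noteq> c"
  have "length s = length c" "Min (set s) = ?m"
    using AB(1) length_shuffles[OF s(1)] set_shuffles[OF s(1)] by simp_all
  moreover have "min_pos s < length A"
    unfolding min_pos_def \<open>Min (set s) = ?m\<close>
    using takeWhile_shuffle_less[OF AB(5,3,4) s(1)] s(2) AB(1) by simp
  ultimately show "block_weight s < block_weight c"
    unfolding block_weight_def using mc by simp
qed

lemma increasing_sum_in_span_min_first:
  assumes "list_partition {1..n} \<Phi>" "merges (block_sizes \<Phi>) M"
  shows "(increasing_sum n \<Phi> :: (nat \<Rightarrow> nat) \<Rightarrow> 'k::comm_ring_1) \<in> fun_module.span
    {increasing_sum n \<Psi> | \<Psi>. list_partition {1..n} \<Psi> \<and> (\<forall>c\<in>\<Psi>. hd c = Min (set c)) \<and>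
      merges (block_sizes \<Psi>) M}"
  using assms
proof (induction "\<Sum>c\<in>\<Phi>. block_weight c" arbitrary: \<Phi> rule: less_induct)
  case less
  let ?S = "{increasing_sum n \<Psi> | \<Psi>. list_partition {1..n} \<Psi> \<and> (\<forall>c\<in>\<Psi>. hd c = Min (set c)) \<and>
      merges (block_sizes \<Psi>) M} :: ((nat \<Rightarrow> nat) \<Rightarrow> 'k) set"
  show ?case
  proof (cases "\<forall>c\<in>\<Phi>. hd c = Min (set c)")
    case True
    then show ?thesis
      using less.prems by (auto intro: fun_module.span_base)
  next
    case False
    then obtain c where c: "c \<in> \<Phi>" "hd c \<noteq> Min (set c)"
      by blast
    have "c \<noteq> []" "distinct c"
      using list_partition_block[OF less.prems(1) c(1)] by simp_all
    obtain A B where AB: "c = A @ B" "A \<noteq> []" "B \<noteq> []" "hd B = Min (set c)" "Min (set c) \<notin> set A"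
      using split_before_min[OF \<open>c \<noteq> []\<close> c(2)] .
    let ?\<Psi> = "\<Phi> - {c}"
    have fin: "finite ?\<Psi>"
      using less.prems(1) by (simp add: list_partition_def)
    have weight_\<Phi>: "(\<Sum>d\<in>\<Phi>. block_weight d) = block_weight c + (\<Sum>d\<in>?\<Psi>. block_weight d)"
      using c(1) fin by (simp add: sum.remove)
    note split =
      list_partition_split_block[OF less.prems(1) c(1)[unfolded AB(1)] AB(2,3), folded AB(1)]
    have "(\<Sum>d\<in>insert A (insert B ?\<Psi>). block_weight d) < (\<Sum>d\<in>\<Phi>. block_weight d)"
      using block_weight_split(1)[OF AB] split(2,3) fin weight_\<Phi> by simp
    moreover have "merges (block_sizes (insert A (insert B ?\<Psi>))) M"
      using split(5) less.prems(2) by (rule converse_rtranclp_into_rtranclp)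
    ultimately have split_in: "increasing_sum n (insert A (insert B ?\<Psi>)) \<in> fun_module.span ?S"
      using less.hyps split(1) by blast
    have "increasing_sum n (insert s ?\<Psi>) \<in> fun_module.span ?S" if s: "s \<in> shuffles A B - {c}" for s
    proof -
      have s1: "s \<in> shuffles A B"
        using s by simp
      have "distinct s" "set s = set c"
        using distinct_disjoint_shuffles[OF _ _ split(4) s1] set_shuffles[OF s1] \<open>distinct c\<close> AB(1)
        by simp_all
      note replace = list_partition_replace_block[OF less.prems(1) c(1) this]
      have "(\<Sum>d\<in>insert s ?\<Psi>. block_weight d) < (\<Sum>d\<in>\<Phi>. block_weight d)"
        using block_weight_split(2)[OF AB s1] s replace(2) fin weight_\<Phi> by simp
      then show ?thesis
        using less.hyps replace(1,3) less.prems(2) by simp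
    qed
    then have "(\<Sum>s\<in>shuffles A B - {c}. increasing_sum n (insert s ?\<Psi>)) \<in> fun_module.span ?S"
      by (rule fun_module.span_sum)
    with split_in have "increasing_sum n (insert c ?\<Psi>) \<in> fun_module.span ?S"
      unfolding increasing_sum_split_block[OF split(4), folded AB(1)] by (rule fun_module.span_diff)
    then show ?thesis
      using c(1) by (simp add: insert_absorb)
  qed
qed

section \<open>The two spanning sets\<close>

lemma list_partition_list_of_sizes:
  "finite \<Phi> \<Longrightarrow> block_sizes \<Phi> = mset \<alpha> \<Longrightarrow> \<exists>E. distinct E \<and> set E = \<Phi> \<and> map length E = \<alpha>"
proof (induction \<alpha> arbitrary: \<Phi>)
  case Nil
  then show ?case
    by (simp add: block_sizes_def mset_set_empty_iff)
next
  case (Cons a \<alpha>)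
  obtain c \<Psi> where "\<Phi> = insert c \<Psi>" "c \<notin> \<Psi>" "length c = a" "block_sizes \<Psi> = mset \<alpha>"
    using block_sizes_add_mset_E[of \<Phi> a "mset \<alpha>"] Cons.prems by auto
  moreover obtain E where "distinct E" "set E = \<Psi>" "map length E = \<alpha>"
    using Cons.IH[of \<Psi>] Cons.prems(1) calculation by auto
  ultimately show ?case
    by (intro exI[of _ "c # E"]) auto
qed

lemma list_partition_list_sorted_by_heads:
  assumes part: "list_partition S \<Phi>"
  shows "\<exists>E. distinct E \<and> set E = \<Phi> \<and> sorted_wrt (\<lambda>c d. hd d < hd c) E"
proof -
  have "finite \<Phi>"
    using part by (simp add: list_partition_def)
  then obtain xs where xs: "set xs = \<Phi>" "distinct xs"
    using finite_distinct_list by blast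
  have "inj_on hd \<Phi>"
  proof (rule inj_onI)
    fix c d assume cd: "c \<in> \<Phi>" "d \<in> \<Phi>" "hd c = hd d"
    have "c \<noteq> []" "d \<noteq> []" "c \<noteq> d \<longrightarrow> set c \<inter> set d = {}"
      using part cd(1,2) unfolding list_partition_def by simp_all
    then show "c = d"
      using cd(3) hd_in_set by (metis disjoint_iff)
  qed
  then have "sorted_wrt (<) (map hd (sort_key hd xs))"
    using xs by (simp add: strict_sorted_iff distinct_map)
  then have "sorted_wrt (\<lambda>c d. hd d < hd c) (rev (sort_key hd xs))"
    by (simp add: sorted_wrt_map sorted_wrt_rev)
  then show ?thesis
    using xs by (intro exI[of _ "rev (sort_key hd xs)"]) simp
qed

lemma increasing_sum_eq_R_generator:
  assumes "list_partition {1..n} \<Psi>" "block_sizes \<Psi> = mset \<alpha>"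
  shows "\<exists>v\<in>perms n. increasing_sum n \<Psi> = alg_mult n (BI n (SetC \<alpha>)) (perm_elem v)"
proof -
  have "finite \<Psi>"
    using assms(1) by (simp add: list_partition_def)
  then obtain E where E: "distinct E" "set E = \<Psi>" "map length E = \<alpha>"
    using list_partition_list_of_sizes assms(2) by blast
  have part: "list_partition {1..n} (set E)"
    using assms(1) E(2) by simp
  then show ?thesis
    using increasing_sum_eq_alg_mult_B[OF part E(1)]
      inv_word_perm(1)[OF list_partition_concat[OF part E(1)]] E
    by auto
qed

lemma min_first_increasing_sum_eq_S_generator:
  assumes \<alpha>: "\<alpha> \<in> Comps n"
    and \<Psi>: "list_partition {1..n} \<Psi>" "\<forall>c\<in>\<Psi>. hd c = Min (set c)" "merges (block_sizes \<Psi>) (mset \<alpha>)"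
  shows "\<exists>w\<in>perms n. part_le (underlying_partition (cLRM' n w)) (underlying_partition \<alpha>) \<and>
    increasing_sum n \<Psi> = alg_mult n (BI n (LRM' n w)) (perm_elem w)"
proof -
  obtain E where E: "distinct E" "set E = \<Psi>" "sorted_wrt (\<lambda>c d. hd d < hd c) E"
    using list_partition_list_sorted_by_heads[OF \<Psi>(1)] by blast
  let ?w = "inv (word_perm n (concat E))" and ?\<beta> = "map length E"
  have part: "list_partition {1..n} (set E)"
    using \<Psi>(1) E(2) by simp
  note L = list_partition_concat[OF part E(1)]
  have "?\<beta> \<in> Comps n"
    using list_partition_lengths_Comps[OF part E(1)] .
  moreover have LRM': "LRM' n ?w = SetC ?\<beta>"
    using LRM'_inv_word_perm_concat[OF part E(1) _ E(3)] \<Psi>(2) E(2) by simp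
  ultimately have "cLRM' n ?w = ?\<beta>"
    unfolding cLRM'_def by (simp add: CompI_SetC)
  moreover have "merges (mset ?\<beta>) (mset \<alpha>)"
    using \<Psi>(3) block_sizes_set[OF E(1)] E(2) by simp
  ultimately have "part_le (underlying_partition (cLRM' n ?w)) (underlying_partition \<alpha>)"
    using part_le_underlying_partition_iff[OF \<alpha>] by simp
  moreover have "increasing_sum n \<Psi> = alg_mult n (BI n (LRM' n ?w)) (perm_elem ?w)"
    using increasing_sum_eq_alg_mult_B[OF part E(1)] E(2) LRM' by simp
  ultimately show ?thesis
    using inv_word_perm(1)[OF L] by blast
qed

lemma S_generator_in_span_R:
  assumes \<alpha>: "\<alpha> \<in> Comps n" and w: "w \<in> perms n"
    and le: "part_le (underlying_partition (cLRM' n w)) (underlying_partition \<alpha>)"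
  shows "(alg_mult n (BI n (LRM' n w)) (perm_elem w) :: (nat \<Rightarrow> nat) \<Rightarrow> 'k::comm_ring_1) \<in>
    fun_module.span ((\<lambda>v. alg_mult n (BI n (SetC \<alpha>)) (perm_elem v)) ` perms n)"
proof -
  let ?\<beta> = "cLRM' n w"
  have "LRM' n w \<subseteq> {1..n-1}"
    unfolding LRM'_def LRM_def by auto
  then have \<beta>: "?\<beta> \<in> Comps n" "SetC ?\<beta> = LRM' n w"
    using SetC_CompI unfolding cLRM'_def by auto
  have "(alg_mult n (BI n (LRM' n w)) (perm_elem w) :: (nat \<Rightarrow> nat) \<Rightarrow> 'k) =
      increasing_sum n (set (blocks ?\<beta> w))"
    using alg_mult_B_perm_elem[OF \<beta>(1) w] \<beta>(2) by simp
  also have "\<dots> \<in> fun_module.span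
      {increasing_sum n \<Psi> | \<Psi>. list_partition {1..n} \<Psi> \<and> block_sizes \<Psi> = mset \<alpha>}"
  proof (rule increasing_sum_in_span_merged)
    show "merges (block_sizes (set (blocks ?\<beta> w))) (mset \<alpha>)"
      using le part_le_underlying_partition_iff[OF \<alpha>] block_sizes_blocks[OF \<beta>(1) w] by simp
  qed (use list_partition_blocks(1)[OF \<beta>(1) w] in simp_all)
  also have "\<dots> \<subseteq> fun_module.span ((\<lambda>v. alg_mult n (BI n (SetC \<alpha>)) (perm_elem v)) ` perms n)"
  proof (rule fun_module.span_mono, rule subsetI)
    fix x assume "x \<in> {increasing_sum n \<Psi> | \<Psi>. list_partition {1..n} \<Psi> \<and> block_sizes \<Psi> = mset \<alpha>}"
    then obtain \<Psi> where "x = increasing_sum n \<Psi>" "list_partition {1..n} \<Psi>" "block_sizes \<Psi> = mset \<alpha>"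
      by blast
    then show "x \<in> (\<lambda>v. alg_mult n (BI n (SetC \<alpha>)) (perm_elem v)) ` perms n"
      using increasing_sum_eq_R_generator by blast
  qed
  finally show ?thesis .
qed

lemma R_generator_in_span_S:
  assumes \<alpha>: "\<alpha> \<in> Comps n" and v: "v \<in> perms n"
  shows "(alg_mult n (BI n (SetC \<alpha>)) (perm_elem v) :: (nat \<Rightarrow> nat) \<Rightarrow> 'k::comm_ring_1) \<in>
    fun_module.span ((\<lambda>w. alg_mult n (BI n (LRM' n w)) (perm_elem w)) `
      {w \<in> perms n. part_le (underlying_partition (cLRM' n w)) (underlying_partition \<alpha>)})"
proof -
  have "(alg_mult n (BI n (SetC \<alpha>)) (perm_elem v) :: (nat \<Rightarrow> nat) \<Rightarrow> 'k) =
      increasing_sum n (set (blocks \<alpha> v))"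
    by (rule alg_mult_B_perm_elem[OF \<alpha> v])
  also have "\<dots> \<in> fun_module.span {increasing_sum n \<Psi> | \<Psi>. list_partition {1..n} \<Psi> \<and>
      (\<forall>c\<in>\<Psi>. hd c = Min (set c)) \<and> merges (block_sizes \<Psi>) (mset \<alpha>)}"
    using increasing_sum_in_span_min_first[OF list_partition_blocks(1)[OF \<alpha> v], of "mset \<alpha>"]
      block_sizes_blocks[OF \<alpha> v] by simp
  also have "\<dots> \<subseteq> fun_module.span ((\<lambda>w. alg_mult n (BI n (LRM' n w)) (perm_elem w)) `
      {w \<in> perms n. part_le (underlying_partition (cLRM' n w)) (underlying_partition \<alpha>)})"
  proof (rule fun_module.span_mono, rule subsetI)
    fix x assume "x \<in> {increasing_sum n \<Psi> | \<Psi>. list_partition {1..n} \<Psi> \<and>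
      (\<forall>c\<in>\<Psi>. hd c = Min (set c)) \<and> merges (block_sizes \<Psi>) (mset \<alpha>)}"
    then obtain \<Psi> where "x = increasing_sum n \<Psi>" "list_partition {1..n} \<Psi>"
      "\<forall>c\<in>\<Psi>. hd c = Min (set c)" "merges (block_sizes \<Psi>) (mset \<alpha>)"
      by blast
    then show "x \<in> (\<lambda>w. alg_mult n (BI n (LRM' n w)) (perm_elem w)) `
      {w \<in> perms n. part_le (underlying_partition (cLRM' n w)) (underlying_partition \<alpha>)}"
      using min_first_increasing_sum_eq_S_generator[OF \<alpha>] by blast
  qed
  finally show ?thesis .
qed

theorem theorem3p7:
  fixes n :: nat and \<alpha> :: "nat list"
  assumes "\<alpha> \<in> Comps n"
  shows "kspan {w \<in> perms n. part_le (underlying_partition (cLRM' n w)) (underlying_partition \<alpha>)}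
           (\<lambda>w. alg_mult n (BI n (LRM' n w)) (perm_elem w) :: (nat \<Rightarrow> nat) \<Rightarrow> 'k::comm_ring_1)
         = {alg_mult n (BI n (SetC \<alpha>)) a | a. a \<in> grp_alg n}"
proof -
  let ?W = "{w \<in> perms n. part_le (underlying_partition (cLRM' n w)) (underlying_partition \<alpha>)}"
  let ?S_gen = "\<lambda>w. alg_mult n (BI n (LRM' n w)) (perm_elem w) :: (nat \<Rightarrow> nat) \<Rightarrow> 'k"
  let ?R_gen = "\<lambda>v. alg_mult n (BI n (SetC \<alpha>)) (perm_elem v) :: (nat \<Rightarrow> nat) \<Rightarrow> 'k"
  have "kspan ?W ?S_gen = fun_module.span (?S_gen ` ?W)"
    by (rule kspan_eq_span) (simp add: finite_perms)
  also have "\<dots> = fun_module.span (?R_gen ` perms n)"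
    unfolding fun_module.span_eq
    using S_generator_in_span_R[OF assms] R_generator_in_span_S[OF assms] by blast
  also have "\<dots> = kspan (perms n) ?R_gen"
    by (rule kspan_eq_span[symmetric]) (rule finite_perms)
  also have "\<dots> = {alg_mult n (BI n (SetC \<alpha>)) a | a. a \<in> grp_alg n}"
    by (rule right_ideal_eq_kspan[symmetric])
  finally show ?thesis .
qed

end
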